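(* Let $k_1,k_2\ge2$ with $k_1+k_2$ even, and let $a=(u_1,u_2)$ be a CLT pair where $u_1,u_2$ are closed words with first letter $1$, without self edges, of lengths $k_1$ and $k_2$. Then either $\mathrm{wt}(a)=1+\#E_a$ or $\mathrm{wt}(a)=\#E_a$. Moreover: (i) if $\mathrm{wt}(a)=1+\#E_a$, then the graph $G_a$ is a tree, $N_e^{u_i}=2$ for all $e\in E_{u_i}$ ($i=1,2$), and $N_e^a=2$ for all $e\in E_a$ except exactly one edge $e_0$, for which $N_{e_0}^a=4$; (ii) if $\mathrm{wt}(a)=\#E_a$, then for each $i=1,2$ there is an edge $e\in E_a$ with $N_e^{u_i}=1$, and $N_e^a=2$ for all $e\in E_a$.
   Context: A word is a finite sequence $w=(s_1,\dots,s_m)$ of positive integers; $\ell(w)=m$; closed means $s_1=s_m$. $\mathrm{supp}(w)$ is its set of letters. Its graph $G_w$ has vertices $\mathrm{supp}(w)$ and undirected edges $E_w=\{\{s_i,s_{i+1}\}:1\le i\le m-1\}$; a self edge is one of form $\{u,u\}$. $N_e^w=\#\{i\le m-1:\{s_i,s_{i+1}\}=e\}$. For $a=(w_1,w_2)$: $\mathrm{wt}(a)=\#(\mathrm{supp}(w_1)\cup\mathrm{supp}(w_2))$, $G_a$ has vertices $\mathrm{supp}(w_1)\cup\mathrm{supp}(w_2)$ and edges $E_a=E_{w_1}\cup E_{w_2}$, $N_e^a=N_e^{w_1}+N_e^{w_2}$. $(w_1,w_2)$ is a CLT pair if $N_e^a\ge2$ for all $e\in E_a$, $E_{w_1}\cap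 E_{w_2}\neq\emptyset$, and $\mathrm{wt}(a)=\frac{\ell(w_1)+\ell(w_2)}{2}-1$. *)

theory Defs
  imports Main
begin

text \<open>Words are lists of positive integers (nat list with all letters > 0).
  Undirected edges are represented as sets {u,v} (a singleton {u} is a self edge).\<close>

type_synonym word = "nat list"

definition is_word :: "word \<Rightarrow> bool" where
  "is_word w \<longleftrightarrow> (\<forall>s\<in>set w. 0 < s)"

definition closed_word :: "word \<Rightarrow> bool" where
  "closed_word w \<longleftrightarrow> w \<noteq> [] \<and> hd w = last w"

definition supp :: "word \<Rightarrow> nat set" where
  "supp w = set w"

definition edges :: "word \<Rightarrow> nat set set" where
  "edges w = {{w ! i, w ! (i+1)} | i. i + 1 < length w}"

definition no_self_edges :: "word \<Rightarrow> bool" where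
  "no_self_edges w \<longleftrightarrow> (\<forall>i. i + 1 < length w \<longrightarrow> w ! i \<noteq> w ! (i+1))"

definition Ncount :: "word \<Rightarrow> nat set \<Rightarrow> nat" where
  "Ncount w e = card {i. i + 1 < length w \<and> {w ! i, w ! (i+1)} = e}"

definition wt_pair :: "word \<Rightarrow> word \<Rightarrow> nat" where
  "wt_pair w1 w2 = card (supp w1 \<union> supp w2)"

definition verts_pair :: "word \<Rightarrow> word \<Rightarrow> nat set" where
  "verts_pair w1 w2 = supp w1 \<union> supp w2"

definition edges_pair :: "word \<Rightarrow> word \<Rightarrow> nat set set" where
  "edges_pair w1 w2 = edges w1 \<union> edges w2"

definition Ncount_pair :: "word \<Rightarrow> word \<Rightarrow> nat set \<Rightarrow> nat" where
  "Ncount_pair w1 w2 e = Ncount w1 e + Ncount w2 e"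

definition CLT_pair :: "word \<Rightarrow> word \<Rightarrow> bool" where
  "CLT_pair w1 w2 \<longleftrightarrow>
     (\<forall>e\<in>edges_pair w1 w2. Ncount_pair w1 w2 e \<ge> 2) \<and>
     edges w1 \<inter> edges w2 \<noteq> {} \<and>
     2 * wt_pair w1 w2 + 2 = length w1 + length w2"

definition graph_connected :: "nat set \<Rightarrow> nat set set \<Rightarrow> bool" where
  "graph_connected V E \<longleftrightarrow>
     (\<forall>u\<in>V. \<forall>v\<in>V. (u, v) \<in> ({(x, y). {x, y} \<in> E})\<^sup>*)"

definition has_cycle :: "nat set \<Rightarrow> nat set set \<Rightarrow> bool" where
  "has_cycle V E \<longleftrightarrow>
     (\<exists>vs. length vs \<ge> 3 \<and> distinct vs \<and> set vs \<subseteq> V \<and>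
        (\<forall>i<length vs. {vs ! i, vs ! ((i + 1) mod length vs)} \<in> E))"

definition is_tree :: "nat set \<Rightarrow> nat set set \<Rightarrow> bool" where
  "is_tree V E \<longleftrightarrow> V \<noteq> {} \<and> graph_connected V E \<and> \<not> has_cycle V E"

end

theory Submission
  imports Defs
begin

(* Let V and E be the vertex and edge sets of the graph of a CLT pair (u1,u2)
   of closed words.  Each closed word is a walk visiting all its letters, and the two walks
   share an edge, so the graph is connected and hence card V <= card E + 1.  Summing the
   edge multiplicities gives (length u1 - 1) + (length u2 - 1) = 2 * card V, and every
   multiplicity is at least 2, so card E <= card V.  This leaves two cases.
   If card V = card E, all multiplicities are exactly 2, and the shared edge is then
   traversed once by each word.  If card V = card E + 1, removing any edge disconnects the
   graph, so the graph is a tree; a closed walk crosses each bridge an even number of times,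
   so the shared edge is traversed at least 4 times and, by the total count, every other
   edge exactly twice.  The locale assumes only
   that both words are closed and form a CLT pair.
   In the tree case a self edge would have to be a bridge, which is impossible, so the absence
   of self edges comes for free. *)

section \<open>Undirected graphs with edges given as vertex sets\<close>

definition adj :: "'a set set \<Rightarrow> ('a \<times> 'a) set" where
  "adj E = {(x, y). {x, y} \<in> E}"

lemma adj_sym: "(x, y) \<in> adj E \<Longrightarrow> (y, x) \<in> adj E"
  by (simp add: adj_def insert_commute)

lemma reach_sym: "(a, b) \<in> (adj E)\<^sup>* \<Longrightarrow> (b, a) \<in> (adj E)\<^sup>*"
  by (induction rule: rtrancl_induct) (auto intro: converse_rtrancl_into_rtrancl adj_sym)

lemma reach_mono:
  assumes "A \<subseteq> B" "(a, b) \<in> (adj A)\<^sup>*"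
  shows "(a, b) \<in> (adj B)\<^sup>*"
proof -
  have "adj A \<subseteq> adj B" using assms(1) by (auto simp: adj_def)
  then show ?thesis using assms(2) by (rule rtrancl_mono[THEN subsetD])
qed

lemma reach_leaves_set:
  assumes "(a, b) \<in> (adj E)\<^sup>*" "a \<in> S" "b \<notin> S"
  shows "\<exists>x y. x \<in> S \<and> y \<notin> S \<and> {x, y} \<in> E"
  using assms
proof (induction rule: rtrancl_induct)
  case (step b c)
  show ?case
  proof (cases "b \<in> S")
    case True
    then show ?thesis using step.hyps(2) step.prems(2) by (auto simp: adj_def)
  qed (use step in blast)
qed simp

lemma finite_edges_of_finite:
  assumes "finite V" "\<forall>e\<in>E. e \<subseteq> V"
  shows "finite E"
proof (rule finite_subset)
  show "E \<subseteq> Pow V" using assms(2) by blast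
qed (simp add: assms(1))

text \<open>Growing a connected set S one vertex at a time: every new vertex costs a new edge
  that is not contained in S.\<close>
lemma card_outside_le:
  assumes finV: "finite V" and EV: "\<forall>e\<in>E. e \<subseteq> V"
    and reach: "\<forall>v\<in>V. (v0, v) \<in> (adj E)\<^sup>*"
    and "S \<subseteq> V" "v0 \<in> S"
  shows "card (V - S) \<le> card {e\<in>E. \<not> e \<subseteq> S}"
  using assms(4,5)
proof (induction "card (V - S)" arbitrary: S)
  case 0
  then show ?case by simp
next
  case (Suc n)
  have "V - S \<noteq> {}" using Suc.hyps(2) by (metis card.empty nat.distinct(1))
  then obtain v where v: "v \<in> V" "v \<notin> S" by blast
  then have "(v0, v) \<in> (adj E)\<^sup>*" using reach by blast
  then obtain x y where xy: "x \<in> S" "y \<notin> S" "{x, y} \<in> E"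
    using reach_leaves_set[OF _ Suc.prems(2) v(2)] by blast
  have yV: "y \<in> V" using EV xy(3) by auto
  have "V - insert y S = (V - S) - {y}" by blast
  then have "card (V - insert y S) = n"
    using Suc.hyps(2) yV xy(2) finV by (simp add: card_Diff_singleton)
  then have "n \<le> card {e\<in>E. \<not> e \<subseteq> insert y S}"
    using Suc.hyps(1) Suc.prems yV by auto
  also have "\<dots> < card {e\<in>E. \<not> e \<subseteq> S}"
  proof (rule psubset_card_mono)
    show "finite {e\<in>E. \<not> e \<subseteq> S}" using finite_edges_of_finite[OF finV EV] by simp
    have "{x, y} \<in> {e\<in>E. \<not> e \<subseteq> S}" "{x, y} \<notin> {e\<in>E. \<not> e \<subseteq> insert y S}"
      using xy by auto
    then show "{e\<in>E. \<not> e \<subseteq> insert y S} \<subset> {e\<in>E. \<not> e \<subseteq> S}"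
      by blast
  qed
  finally show ?case using Suc.hyps(2) by simp
qed

lemma connected_card_le:
  assumes "finite V" "\<forall>e\<in>E. e \<subseteq> V" "v0 \<in> V" "\<forall>v\<in>V. (v0, v) \<in> (adj E)\<^sup>*"
  shows "card V \<le> card E + 1"
proof -
  have "card V - 1 \<le> card {e\<in>E. \<not> e \<subseteq> {v0}}"
    using card_outside_le[OF assms(1,2,4), of "{v0}"] assms(1,3) by simp
  also have "\<dots> \<le> card E"
    using finite_edges_of_finite[OF assms(1,2)] by (intro card_mono) auto
  finally show ?thesis by simp
qed

text \<open>If a connected graph attains that bound, every edge is a bridge: otherwise the graph
  minus that edge would still be connected, violating the bound.\<close>
lemma bridge_if_card_eq:
  assumes finV: "finite V" and EV: "\<forall>e\<in>E. e \<subseteq> V" and "v0 \<in> V"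
    and reach: "\<forall>v\<in>V. (v0, v) \<in> (adj E)\<^sup>*"
    and card_eq: "card V = card E + 1" and pq: "{p, q} \<in> E"
  shows "(q, p) \<notin> (adj (E - {{p, q}}))\<^sup>*"
proof
  let ?R = "adj (E - {{p, q}})"
  assume qp: "(q, p) \<in> ?R\<^sup>*"
  have "adj E \<subseteq> ?R\<^sup>*"
  proof
    fix z assume "z \<in> adj E"
    then obtain x y where z: "z = (x, y)" "{x, y} \<in> E" by (auto simp: adj_def)
    show "z \<in> ?R\<^sup>*"
    proof (cases "{x, y} = {p, q}")
      case True
      then show ?thesis using qp reach_sym[OF qp] z by (auto simp: doubleton_eq_iff)
    qed (use z in \<open>auto simp: adj_def\<close>)
  qed
  then have "(adj E)\<^sup>* \<subseteq> ?R\<^sup>*" by (rule rtrancl_subset_rtrancl)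
  then have reach': "\<forall>v\<in>V. (v0, v) \<in> ?R\<^sup>*" using reach by blast
  have EV': "\<forall>e\<in>E - {{p, q}}. e \<subseteq> V" using EV by blast
  have "card V \<le> card (E - {{p, q}}) + 1"
    by (rule connected_card_le[OF finV EV' \<open>v0 \<in> V\<close> reach'])
  moreover have "finite E" using finite_edges_of_finite[OF finV EV] .
  then have "0 < card E" using pq card_gt_0_iff by blast
  moreover have "card (E - {{p, q}}) = card E - 1" using pq by (rule card_Diff_singleton)
  ultimately show False using card_eq by linarith
qed

text \<open>A graph in which every edge is a bridge has no cycle: going around a cycle from its
  second vertex back to its first avoids the edge joining them.\<close>
lemma no_cycle_if_bridges:
  assumes bridge: "\<And>p q. {p, q} \<in> E \<Longrightarrow> (q, p) \<notin> (adj (E - {{p, q}}))\<^sup>*"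
  shows "\<not> has_cycle V E"
proof
  assume "has_cycle V E"
  then obtain vs where len: "length vs \<ge> 3" and dist: "distinct vs"
    and cyc: "\<forall>i<length vs. {vs ! i, vs ! ((i + 1) mod length vs)} \<in> E"
    unfolding has_cycle_def by blast
  let ?n = "length vs" and ?a = "vs ! 0" and ?b = "vs ! 1"
  let ?R = "adj (E - {{?a, ?b}})"
  have not_ab: "vs ! j \<noteq> ?a \<and> vs ! j \<noteq> ?b" if "2 \<le> j" "j < ?n" for j
    using dist that nth_eq_iff_index_eq by fastforce
  have step: "(vs ! j, vs ! ((j + 1) mod ?n)) \<in> ?R"
    if "j < ?n" "{vs ! j, vs ! ((j + 1) mod ?n)} \<noteq> {?a, ?b}" for j
    using cyc that by (auto simp: adj_def)
  have path: "(?b, vs ! j) \<in> ?R\<^sup>*" if "1 \<le> j" "j < ?n" for j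
    using that
  proof (induction j)
    case (Suc j)
    show ?case
    proof (cases "j = 0")
      case False
      then have "(vs ! j, vs ! Suc j) \<in> ?R"
        using step[of j] not_ab[of "Suc j"] Suc.prems by (auto simp: doubleton_eq_iff)
      then show ?thesis using Suc False by (simp add: rtrancl_into_rtrancl)
    qed simp
  qed simp
  have "?n - 1 + 1 = ?n" using len by simp
  then have wrap: "(?n - 1 + 1) mod ?n = 0" by (metis mod_self)
  have "(vs ! (?n - 1), ?a) \<in> ?R"
    using step[of "?n - 1"] wrap not_ab[of "?n - 1"] len by (auto simp: doubleton_eq_iff)
  moreover have "(?b, vs ! (?n - 1)) \<in> ?R\<^sup>*" using path[of "?n - 1"] len by simp
  ultimately have "(?b, ?a) \<in> ?R\<^sup>*" by (simp add: rtrancl_into_rtrancl)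
  moreover have "{?a, ?b} \<in> E" using cyc[rule_format, of 0] len by force
  ultimately show False using bridge by blast
qed

section \<open>Walks: words read as walks in their graph\<close>

lemma edges_Cons2: "edges (x # y # r) = insert {x, y} (edges (y # r))"
proof (rule set_eqI)
  fix e
  have "e \<in> edges (x # y # r) \<longleftrightarrow>
      (\<exists>i. (i = 0 \<or> (\<exists>j. i = Suc j \<and> j + 1 < length (y # r)))
        \<and> i + 1 < length (x # y # r) \<and> e = {(x # y # r) ! i, (x # y # r) ! (i + 1)})"
    unfolding edges_def by (auto simp: less_Suc_eq_0_disj)
  also have "\<dots> \<longleftrightarrow> e \<in> insert {x, y} (edges (y # r))"
    unfolding edges_def by auto
  finally show "e \<in> edges (x # y # r) \<longleftrightarrow> e \<in> insert {x, y} (edges (y # r))" .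
qed

lemma edges_short: "length w < 2 \<Longrightarrow> edges w = {}"
  unfolding edges_def by auto

lemma edge_subset_supp: "e \<in> edges w \<Longrightarrow> e \<subseteq> set w"
  unfolding edges_def by auto

lemma Ncount_short: "length w < 2 \<Longrightarrow> Ncount w e = 0"
  unfolding Ncount_def by auto

lemma Ncount_Cons2:
  "Ncount (x # y # r) e = (if {x, y} = e then 1 else 0) + Ncount (y # r) e"
proof -
  let ?A = "{i. i + 1 < length (y # r) \<and> {(y # r) ! i, (y # r) ! (i + 1)} = e}"
  let ?Z = "{i::nat. i = 0 \<and> {x, y} = e}"
  have split: "{i. i + 1 < length (x # y # r) \<and> {(x # y # r) ! i, (x # y # r) ! (i + 1)} = e}
      = ?Z \<union> Suc ` ?A"
  proof (rule set_eqI)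
    fix i :: nat
    show "i \<in> {i. i + 1 < length (x # y # r) \<and> {(x # y # r) ! i, (x # y # r) ! (i + 1)} = e}
        \<longleftrightarrow> i \<in> ?Z \<union> Suc ` ?A"
      by (cases i) auto
  qed
  have "finite (Suc ` ?A)"
    by (rule finite_imageI, rule finite_subset[of _ "{..<length (y # r)}"]) auto
  then have "card (?Z \<union> Suc ` ?A) = card ?Z + card ?A"
    by (subst card_Un_disjoint) (auto simp: card_image)
  moreover have "card ?Z = (if {x, y} = e then 1 else 0)" by auto
  ultimately show ?thesis unfolding Ncount_def split by simp
qed

lemma Ncount_pos: "e \<in> edges w \<Longrightarrow> 0 < Ncount w e"
  by (induction w rule: induct_list012) (auto simp: edges_Cons2 edges_short Ncount_Cons2)

lemma sum_Ncount:
  "finite A \<Longrightarrow> edges w \<subseteq> A \<Longrightarrow> (\<Sum>e\<in>A. Ncount w e) = length w - 1"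
proof (induction w rule: induct_list012)
  case (3 x y r)
  have "(\<Sum>e\<in>A. Ncount (x # y # r) e)
      = (\<Sum>e\<in>A. if {x, y} = e then 1 else 0) + (\<Sum>e\<in>A. Ncount (y # r) e)"
    by (simp add: Ncount_Cons2 sum.distrib)
  also have "\<dots> = 1 + (length (y # r) - 1)" using 3 by (simp add: edges_Cons2)
  finally show ?case by simp
qed (simp_all add: Ncount_short)

lemma walk_reach: "w \<noteq> [] \<Longrightarrow> v \<in> set w \<Longrightarrow> (hd w, v) \<in> (adj (edges w))\<^sup>*"
proof (induction w rule: induct_list012)
  case (3 x y r)
  show ?case
  proof (cases "v = x")
    case False
    then have "(y, v) \<in> (adj (edges (y # r)))\<^sup>*" using 3 by simp
    then have "(y, v) \<in> (adj (edges (x # y # r)))\<^sup>*"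
      by (rule reach_mono[rotated]) (auto simp: edges_Cons2)
    moreover have "(x, y) \<in> adj (edges (x # y # r))" by (simp add: adj_def edges_Cons2)
    ultimately show ?thesis by (simp add: converse_rtrancl_into_rtrancl)
  qed simp
qed simp_all

lemma Ncount_parity_cut:
  assumes closed: "\<forall>v w. v \<in> C \<longrightarrow> {v, w} \<in> E - {{p, q}} \<longrightarrow> w \<in> C"
    and "q \<in> C" "p \<notin> C"
  shows "edges w \<subseteq> E \<Longrightarrow> w \<noteq> [] \<Longrightarrow>
    (even (Ncount w {p, q}) \<longleftrightarrow> (hd w \<in> C \<longleftrightarrow> last w \<in> C))"
proof (induction w rule: induct_list012)
  case (3 x y r)
  have xy: "{x, y} \<in> E" and IH: "even (Ncount (y # r) {p, q}) \<longleftrightarrow> (y \<in> C \<longleftrightarrow> last (y # r) \<in> C)"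
    using 3 by (auto simp: edges_Cons2)
  show ?case
  proof (cases "{x, y} = {p, q}")
    case True
    then have "x \<in> C \<longleftrightarrow> y \<notin> C" using assms(2,3) by (auto simp: doubleton_eq_iff)
    then show ?thesis using IH True by (auto simp: Ncount_Cons2)
  next
    case False
    then have "{x, y} \<in> E - {{p, q}}" "{y, x} \<in> E - {{p, q}}"
      using xy by (auto simp: insert_commute)
    then have "x \<in> C \<longleftrightarrow> y \<in> C" using closed by blast
    then show ?thesis using IH False by (auto simp: Ncount_Cons2)
  qed
qed (simp_all add: Ncount_short)

lemma closed_walk_bridge_even:
  assumes "closed_word w" "edges w \<subseteq> E" and bridge: "(q, p) \<notin> (adj (E - {{p, q}}))\<^sup>*"
  shows "even (Ncount w {p, q})"
proof -
  define C where "C = {v. (q, v) \<in> (adj (E - {{p, q}}))\<^sup>*}"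
  have closed: "\<forall>v w. v \<in> C \<longrightarrow> {v, w} \<in> E - {{p, q}} \<longrightarrow> w \<in> C"
    unfolding C_def by (auto simp: adj_def intro: rtrancl_into_rtrancl)
  have "q \<in> C" "p \<notin> C" using bridge unfolding C_def by auto
  moreover have "w \<noteq> []" "hd w = last w" using assms(1) by (auto simp: closed_word_def)
  ultimately show ?thesis using Ncount_parity_cut[OF closed _ _ assms(2)] by simp
qed

section \<open>The graph of a CLT pair of closed words\<close>

locale closed_CLT_pair =
  fixes u1 u2 :: word
  assumes closed1: "closed_word u1" and closed2: "closed_word u2"
    and clt: "CLT_pair u1 u2"
begin

abbreviation "V \<equiv> verts_pair u1 u2"
abbreviation "E \<equiv> edges_pair u1 u2"
abbreviation "N \<equiv> Ncount_pair u1 u2"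

lemma finite_V: "finite V"
  by (simp add: verts_pair_def supp_def)

lemma edges_in_V: "\<forall>e\<in>E. e \<subseteq> V"
  using edge_subset_supp by (auto simp: edges_pair_def verts_pair_def supp_def)

lemma finite_E: "finite E"
  using finite_edges_of_finite[OF finite_V edges_in_V] .

lemma edges_sub: "edges u1 \<subseteq> E" "edges u2 \<subseteq> E"
  by (auto simp: edges_pair_def)

lemma sum_N: "(\<Sum>e\<in>E. N e) = 2 * card V"
proof -
  have "1 \<le> length u1" "1 \<le> length u2"
    using closed1 closed2 by (auto simp: closed_word_def Suc_le_eq)
  moreover have "2 * card V + 2 = length u1 + length u2"
    using clt by (simp add: CLT_pair_def wt_pair_def verts_pair_def)
  ultimately show ?thesis
    using sum_Ncount[OF finite_E edges_sub(1)] sum_Ncount[OF finite_E edges_sub(2)]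
    by (simp add: Ncount_pair_def sum.distrib)
qed

lemma shared_edge: "\<exists>c. c \<in> edges u1 \<and> c \<in> edges u2"
  using clt unfolding CLT_pair_def by blast

text \<open>Both walks pass through a vertex of the shared edge, so the graph is connected.\<close>
lemma connected: "\<exists>v0\<in>V. \<forall>v\<in>V. (v0, v) \<in> (adj E)\<^sup>*"
proof -
  obtain c where c: "c \<in> edges u1" "c \<in> edges u2" using shared_edge by blast
  then obtain x y where "c = {x, y}" unfolding edges_def by blast
  then have x: "x \<in> c" by simp
  have reach_in: "(x, v) \<in> (adj E)\<^sup>*"
    if "closed_word w" "edges w \<subseteq> E" "x \<in> set w" "v \<in> set w" for w v
  proof -
    have "w \<noteq> []" using that(1) by (simp add: closed_word_def)
    then have "(hd w, x) \<in> (adj (edges w))\<^sup>*" "(hd w, v) \<in> (adj (edges w))\<^sup>*"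
      using walk_reach that(3,4) by blast+
    then have "(x, v) \<in> (adj (edges w))\<^sup>*" by (meson reach_sym rtrancl_trans)
    then show ?thesis by (rule reach_mono[OF that(2)])
  qed
  have "x \<in> set u1" "x \<in> set u2" using c x edge_subset_supp by blast+
  then have "\<forall>v\<in>V. (x, v) \<in> (adj E)\<^sup>*"
    using reach_in[OF closed1 edges_sub(1)] reach_in[OF closed2 edges_sub(2)]
    unfolding verts_pair_def supp_def by blast
  moreover have "x \<in> V" using \<open>x \<in> set u1\<close> by (simp add: verts_pair_def supp_def)
  ultimately show ?thesis by blast
qed

lemma N_ge_2: "e \<in> E \<Longrightarrow> 2 \<le> N e"
  using clt by (simp add: CLT_pair_def)

text \<open>Counting multiplicities bounds #E from above by the weight, connectivity from below.\<close>
lemma card_bounds: "card E \<le> card V \<and> card V \<le> card E + 1"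
proof
  have "(\<Sum>e\<in>E. 2) \<le> (\<Sum>e\<in>E. N e)" using N_ge_2 by (intro sum_mono) auto
  then show "card E \<le> card V" using sum_N by simp
  show "card V \<le> card E + 1"
    using connected connected_card_le[OF finite_V edges_in_V] by blast
qed

text \<open>The case wt = #E: every edge has multiplicity 2, so the shared edge is used once by each word.\<close>
lemma case_card_eq:
  assumes "card V = card E"
  shows "(\<exists>e\<in>E. Ncount u1 e = 1) \<and> (\<exists>e\<in>E. Ncount u2 e = 1) \<and> (\<forall>e\<in>E. N e = 2)"
proof -
  have "(\<Sum>e\<in>E. 2) = 2 * card E" by simp
  also have "\<dots> = (\<Sum>e\<in>E. N e)" using sum_N assms by (simp only:)
  finally have sum_eq: "(\<Sum>e\<in>E. 2) = (\<Sum>e\<in>E. N e)" .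
  have all2: "N e = 2" if "e \<in> E" for e
    using sum_mono_inv[OF sum_eq N_ge_2 that finite_E] by simp
  obtain c where c: "c \<in> edges u1" "c \<in> edges u2" using shared_edge by blast
  then have "c \<in> E" using edges_sub by blast
  then have "Ncount u1 c + Ncount u2 c = 2" using all2 by (simp add: Ncount_pair_def)
  then have "Ncount u1 c = 1" "Ncount u2 c = 1"
    using Ncount_pos[OF c(1)] Ncount_pos[OF c(2)] by linarith+
  then show ?thesis using all2 \<open>c \<in> E\<close> by blast
qed

text \<open>The case wt = 1 + #E: every edge is a bridge, so the graph is a tree.\<close>
lemma bridges:
  assumes "card V = card E + 1" "{p, q} \<in> E"
  shows "(q, p) \<notin> (adj (E - {{p, q}}))\<^sup>*"
proof -
  obtain v0 where "v0 \<in> V" "\<forall>v\<in>V. (v0, v) \<in> (adj E)\<^sup>*" using connected by blast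
  then show ?thesis using bridge_if_card_eq[OF finite_V edges_in_V _ _ assms] by blast
qed

lemma tree:
  assumes "card V = card E + 1"
  shows "is_tree V E"
proof -
  obtain v0 where v0: "v0 \<in> V" "\<forall>v\<in>V. (v0, v) \<in> (adj E)\<^sup>*" using connected by blast
  have "(u, v) \<in> (adj E)\<^sup>*" if "u \<in> V" "v \<in> V" for u v
    using reach_sym[of v0 u E] v0(2) that by (meson rtrancl_trans)
  then have "graph_connected V E" unfolding graph_connected_def adj_def by blast
  moreover have "\<not> has_cycle V E" using no_cycle_if_bridges bridges[OF assms] by blast
  ultimately show ?thesis unfolding is_tree_def using v0(1) by blast
qed

lemma even_Ncount:
  assumes "card V = card E + 1" "e \<in> E" "w \<in> {u1, u2}"
  shows "even (Ncount w e)"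
proof -
  obtain p q where pq: "e = {p, q}"
    using assms(2) unfolding edges_pair_def edges_def by blast
  have "closed_word w" "edges w \<subseteq> E" using assms(3) closed1 closed2 edges_sub by auto
  then show ?thesis
    using closed_walk_bridge_even bridges[OF assms(1)] assms(2) unfolding pq by blast
qed

text \<open>In the tree case the shared edge c has multiplicity 4 (at least 2 from each word, by
  parity) and, by the total count, all other edges multiplicity 2; hence each word uses each of
  its edges exactly twice.\<close>
lemma case_tree:
  assumes tree_case: "card V = card E + 1"
  shows "(\<forall>e\<in>edges u1. Ncount u1 e = 2) \<and> (\<forall>e\<in>edges u2. Ncount u2 e = 2)
    \<and> (\<exists>c\<in>E. \<forall>e\<in>E. N e = (if e = c then 4 else 2))"
proof -
  have two_le: "2 \<le> Ncount w e" if "w \<in> {u1, u2}" "e \<in> edges w" for w e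
  proof -
    have "e \<in> E" using that edges_sub by blast
    then have "even (Ncount w e)" using even_Ncount[OF tree_case _ that(1)] by blast
    then show ?thesis using Ncount_pos[OF that(2)] by presburger
  qed
  obtain c where c: "c \<in> edges u1" "c \<in> edges u2" using shared_edge by blast
  have cE: "c \<in> E" using c edges_sub by blast
  have c_ge: "2 \<le> Ncount u1 c" "2 \<le> Ncount u2 c" using two_le c by auto
  define g where "g e = (if e = c then 4 else 2 :: nat)" for e
  have g_le: "g e \<le> N e" if "e \<in> E" for e
    using N_ge_2[OF that] c_ge by (cases "e = c") (simp_all add: g_def Ncount_pair_def)
  have "(\<Sum>e\<in>E. g e) = (\<Sum>e\<in>E. 2 + (if e = c then 2 else 0))"
    by (rule sum.cong) (simp_all add: g_def)
  also have "\<dots> = (\<Sum>e\<in>E. 2) + (\<Sum>e\<in>E. if e = c then 2 else 0)"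
    by (rule sum.distrib)
  also have "\<dots> = 2 * card E + 2" using finite_E cE by simp
  also have "\<dots> = (\<Sum>e\<in>E. N e)" using sum_N tree_case by simp
  finally have sum_eq: "(\<Sum>e\<in>E. g e) = (\<Sum>e\<in>E. N e)" .
  have N_eq: "N e = g e" if "e \<in> E" for e
    using sum_mono_inv[OF sum_eq g_le that finite_E] by simp
  have "Ncount w e = 2" if "w \<in> {u1, u2}" "e \<in> edges w" for w e
  proof -
    have "e \<in> E" using that edges_sub by blast
    then have sum_e: "Ncount u1 e + Ncount u2 e = g e"
      using N_eq by (simp add: Ncount_pair_def)
    have "2 \<le> Ncount w e" by (rule two_le[OF that])
    moreover have "Ncount w e \<le> Ncount u1 e + Ncount u2 e" using that(1) by auto
    ultimately show ?thesis
      using sum_e c_ge that(1) by (cases "e = c") (auto simp: g_def)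
  qed
  moreover have "\<forall>e\<in>E. N e = (if e = c then 4 else 2)" using N_eq by (simp add: g_def)
  ultimately show ?thesis using cE by blast
qed

end

theorem mainTheorem3:
  fixes k1 k2 :: nat and u1 u2 :: word
  assumes "k1 \<ge> 2" and "k2 \<ge> 2" and "even (k1 + k2)"
    and "is_word u1" and "is_word u2"
    and "closed_word u1" and "closed_word u2"
    and "hd u1 = 1" and "hd u2 = 1"
    and "no_self_edges u1" and "no_self_edges u2"
    and "length u1 = k1" and "length u2 = k2"
    and "CLT_pair u1 u2"
  shows "(wt_pair u1 u2 = 1 + card (edges_pair u1 u2) \<or> wt_pair u1 u2 = card (edges_pair u1 u2))
    \<and> (wt_pair u1 u2 = 1 + card (edges_pair u1 u2) \<longrightarrow>
         is_tree (verts_pair u1 u2) (edges_pair u1 u2)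
         \<and> (\<forall>e\<in>edges u1. Ncount u1 e = 2)
         \<and> (\<forall>e\<in>edges u2. Ncount u2 e = 2)
         \<and> (\<exists>!e0. e0 \<in> edges_pair u1 u2 \<and> Ncount_pair u1 u2 e0 \<noteq> 2)
         \<and> (\<forall>e0\<in>edges_pair u1 u2. Ncount_pair u1 u2 e0 \<noteq> 2 \<longrightarrow> Ncount_pair u1 u2 e0 = 4))
    \<and> (wt_pair u1 u2 = card (edges_pair u1 u2) \<longrightarrow>
         (\<exists>e\<in>edges_pair u1 u2. Ncount u1 e = 1)
         \<and> (\<exists>e\<in>edges_pair u1 u2. Ncount u2 e = 1)
         \<and> (\<forall>e\<in>edges_pair u1 u2. Ncount_pair u1 u2 e = 2))"
proof -
  interpret closed_CLT_pair u1 u2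
    using assms(6,7,14) by unfold_locales
  have wt: "wt_pair u1 u2 = card V" by (simp add: wt_pair_def verts_pair_def)
  have tree_case: "is_tree V E \<and> (\<forall>e\<in>edges u1. Ncount u1 e = 2) \<and> (\<forall>e\<in>edges u2. Ncount u2 e = 2)
      \<and> (\<exists>!e0. e0 \<in> E \<and> N e0 \<noteq> 2) \<and> (\<forall>e0\<in>E. N e0 \<noteq> 2 \<longrightarrow> N e0 = 4)"
    if card: "card V = card E + 1"
  proof -
    obtain c where c: "c \<in> E" "\<forall>e\<in>E. N e = (if e = c then 4 else 2)"
      using case_tree[OF card] by blast
    then have "\<exists>!e0. e0 \<in> E \<and> N e0 \<noteq> 2"
      by (intro ex1I[of _ c]) (simp, metis numeral_eq_iff semiring_norm(85))
    then show ?thesis using c tree[OF card] case_tree[OF card] by auto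
  qed
  show ?thesis using card_bounds wt tree_case case_card_eq by auto
qed

end
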